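(* Let $n,m\in\mathbb{N}_0$. Then $L_n^{(m)}(2+\sqrt2)=0$, or $L_n^{(m)}(2-\sqrt2)=0$, if and only if $n=2$ and $m=0$.
   Context: Generalized Laguerre polynomials: $L_n^{(\alpha)}(x)=\sum_{j=0}^n(-1)^j\binom{n+\alpha}{n-j}\frac{x^j}{j!}$. *)

theory Defs
  imports Complex_Main
begin

definition laguerre :: "nat \<Rightarrow> nat \<Rightarrow> real \<Rightarrow> real" where
  "laguerre n m x = (\<Sum>j=0..n. (-1)^j * real ((n + m) choose (n - j)) * x ^ j / fact j)"

end

theory Submission
  imports Defs
begin

(* Write alpha = 2 +- sqrt 2 and n! L_n^(m)(x) = sum_j c_j x^j with integers c_j; then c_n = (-1)^n
   and (n+m)(n+m-1) divides c_j for j <= n-2. With alpha^j = a_j +- b_j sqrt 2, the irrationality of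
   sqrt 2 turns L_n^(m)(alpha) = 0 into sum_j c_j (a_j, b_j) = 0 in Z^2. Taking the cross product with
   (a_(n-1), b_(n-1)) kills the term j = n-1, while the term j = n becomes -c_n 2^(n-1) because
   a_j^2 - 2 b_j^2 = 2^j. Hence every odd q dividing all c_j with j <= n-2 divides c_n = +-1, and
   such a q >= 3 exists unless n = 0 or (n, m) = (2, 0). *)

lemma square_eq_twice_square_int: "(x::int)^2 = 2 * y^2 \<Longrightarrow> y = 0"
proof (induction "nat \<bar>y\<bar>" arbitrary: x y rule: less_induct)
  case less
  show ?case
  proof (rule ccontr)
    assume "y \<noteq> 0"
    have "even x" using less.prems by (metis dvd_triv_left even_power)
    then obtain x' where x': "x = 2 * x'" by blast
    then have "y^2 = 2 * x'^2" using less.prems by (simp add: power2_eq_square)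
    then have "even y" by (metis dvd_triv_left even_power)
    then obtain y' where y': "y = 2 * y'" by blast
    have "x'^2 = 2 * y'^2" using \<open>y^2 = 2 * x'^2\<close> y' by (simp add: power2_eq_square)
    moreover have "nat \<bar>y'\<bar> < nat \<bar>y\<bar>" using y' \<open>y \<noteq> 0\<close> by auto
    ultimately have "y' = 0" using less.hyps by blast
    then show False using y' \<open>y \<noteq> 0\<close> by simp
  qed
qed

fun two_plus_sqrt2_pow :: "nat \<Rightarrow> int \<times> int" where
  "two_plus_sqrt2_pow 0 = (1, 0)"
| "two_plus_sqrt2_pow (Suc j) =
    (let (a, b) = two_plus_sqrt2_pow j in (2 * a + 2 * b, a + 2 * b))"

lemma two_plus_sqrt2_pow_eq:
  assumes "s^2 = (1::real)"
  shows "(2 + s * sqrt 2)^j =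
    of_int (fst (two_plus_sqrt2_pow j)) + s * of_int (snd (two_plus_sqrt2_pow j)) * sqrt 2"
proof (induction j)
  case 0
  then show ?case by simp
next
  case (Suc j)
  obtain a b where ab: "two_plus_sqrt2_pow j = (a, b)" by fastforce
  have "(2 + s * sqrt 2)^Suc j = (2 + s * sqrt 2) * (of_int a + s * of_int b * sqrt 2)"
    using Suc ab by simp
  also have "\<dots> = 2 * of_int a + s^2 * (sqrt 2)^2 * of_int b + s * (of_int a + 2 * of_int b) * sqrt 2"
    by (simp add: algebra_simps power2_eq_square)
  finally show ?case using assms ab by simp
qed

lemma two_plus_sqrt2_pow_norm:
  "(fst (two_plus_sqrt2_pow j))^2 - 2 * (snd (two_plus_sqrt2_pow j))^2 = 2^j"
  by (induction j) (auto simp: split_beta power2_eq_square algebra_simps)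

lemma two_plus_sqrt2_pow_cross_Suc:
  "snd (two_plus_sqrt2_pow j) * fst (two_plus_sqrt2_pow (Suc j))
     - fst (two_plus_sqrt2_pow j) * snd (two_plus_sqrt2_pow (Suc j)) = - (2^j)"
  using two_plus_sqrt2_pow_norm[of j] by (simp add: split_beta power2_eq_square algebra_simps)

lemma root_two_plus_sqrt2_coeffs_eq_0:
  fixes c :: "nat \<Rightarrow> int" and s :: real
  assumes s: "s^2 = 1" and root: "(\<Sum>j\<le>n. of_int (c j) * (2 + s * sqrt 2)^j) = 0"
  shows "(\<Sum>j\<le>n. c j * fst (two_plus_sqrt2_pow j)) = 0"
    and "(\<Sum>j\<le>n. c j * snd (two_plus_sqrt2_pow j)) = 0"
proof -
  define X where "X = (\<Sum>j\<le>n. c j * fst (two_plus_sqrt2_pow j))"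
  define Y where "Y = (\<Sum>j\<le>n. c j * snd (two_plus_sqrt2_pow j))"
  have "of_int X + s * sqrt 2 * of_int Y = (0::real)"
    using root unfolding X_def Y_def
    by (simp add: two_plus_sqrt2_pow_eq[OF s] algebra_simps sum.distrib sum_distrib_left)
  then have XY: "of_int X = - s * sqrt 2 * of_int Y" by linarith
  then have "(of_int X)^2 = s^2 * (sqrt 2)^2 * (of_int Y :: real)^2"
    by (simp add: power_mult_distrib)
  then have "(of_int (X^2) :: real) = of_int (2 * Y^2)" using s by simp
  then have "Y = 0" by (intro square_eq_twice_square_int[of X]) linarith
  with XY show "X = 0" "Y = 0" by simp_all
qed

lemma root_two_plus_sqrt2_dvd_lead_coeff:
  fixes c :: "nat \<Rightarrow> int" and s :: real and q :: int
  assumes s: "s^2 = 1" and root: "(\<Sum>j\<le>Suc k. of_int (c j) * (2 + s * sqrt 2)^j) = 0"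
    and "odd q" and dvd_low: "\<And>j. j < k \<Longrightarrow> q dvd c j"
  shows "q dvd c (Suc k)"
proof -
  define a where "a j = fst (two_plus_sqrt2_pow j)" for j
  define b where "b j = snd (two_plus_sqrt2_pow j)" for j
  define cross where "cross j = c j * (b k * a j - a k * b j)" for j
  have "0 = b k * (\<Sum>j\<le>Suc k. c j * a j) - a k * (\<Sum>j\<le>Suc k. c j * b j)"
    using root_two_plus_sqrt2_coeffs_eq_0[OF s root] unfolding a_def b_def by simp
  also have "\<dots> = (\<Sum>j\<le>Suc k. cross j)"
    unfolding cross_def sum_distrib_left sum_subtractf[symmetric]
    by (rule sum.cong) (simp_all add: algebra_simps)
  also have "\<dots> = (\<Sum>j<k. cross j) - c (Suc k) * 2^k"
    using two_plus_sqrt2_pow_cross_Suc[of k]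
    by (simp add: cross_def a_def b_def lessThan_Suc_atMost[symmetric])
  finally have "c (Suc k) * 2^k = (\<Sum>j<k. cross j)" by simp
  moreover have "q dvd (\<Sum>j<k. cross j)"
    unfolding cross_def by (intro dvd_sum dvd_mult2 dvd_low) simp
  ultimately have "q dvd c (Suc k) * 2^k" by simp
  moreover have "coprime q (2^k)" using \<open>odd q\<close> by simp
  ultimately show ?thesis by (simp add: coprime_dvd_mult_left_iff)
qed

(* c_j = (-1)^j binom(n+m, n-j) n!/j! = (-1)^j binom(n, j) (n+m)!/(m+j)! *)
definition laguerre_coeff :: "nat \<Rightarrow> nat \<Rightarrow> nat \<Rightarrow> int" where
  "laguerre_coeff n m j = (-1)^j * int (n choose j) * int (fact (n + m) div fact (m + j))"

lemma fact_laguerre_eq: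
  "fact n * laguerre n m x = (\<Sum>j\<le>n. of_int (laguerre_coeff n m j) * x^j)"
  unfolding laguerre_def sum_distrib_left atLeast0AtMost
proof (rule sum.cong[OF refl])
  fix j assume "j \<in> {..n}"
  then have j: "j \<le> n" by simp
  have "real (fact (n + m) div fact (m + j)) = fact (n + m) / fact (m + j)"
    using j by (simp add: real_of_nat_div fact_dvd of_nat_fact)
  moreover have "real ((n + m) choose (n - j)) = fact (n + m) / (fact (n - j) * fact (m + j))"
    using j by (simp add: binomial_fact)
  moreover have "real (n choose j) = fact n / (fact j * fact (n - j))"
    using j by (simp add: binomial_fact)
  ultimately show "fact n * ((-1)^j * real ((n + m) choose (n - j)) * x^j / fact j) =
      of_int (laguerre_coeff n m j) * x^j"
    unfolding laguerre_coeff_def by (simp add: mult_ac)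
qed

lemma laguerre_coeff_top: "laguerre_coeff n m n = (-1)^n"
  by (simp add: laguerre_coeff_def add.commute)

lemma fact_div_fact_dvd:
  assumes "i + 2 \<le> N"
  shows "N * (N - 1) dvd fact N div fact i"
proof -
  obtain M where M: "N = Suc (Suc M)" and "i \<le> M"
    using assms by (intro that[of "N - 2"]) auto
  have "fact N = N * (N - 1) * fact M" using M by (simp add: algebra_simps)
  moreover have "fact i dvd (fact M :: nat)" using \<open>i \<le> M\<close> by (rule fact_dvd)
  ultimately have "fact N div fact i = N * (N - 1) * (fact M div fact i)"
    by (simp add: div_mult_swap)
  then show ?thesis by simp
qed

lemma laguerre_coeff_dvd:
  assumes "j + 2 \<le> n"
  shows "int ((n + m) * (n + m - 1)) dvd laguerre_coeff n m j"
proof -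
  have "(n + m) * (n + m - 1) dvd fact (n + m) div fact (m + j)"
    using assms by (intro fact_div_fact_dvd) simp
  then show ?thesis
    unfolding laguerre_coeff_def by (intro dvd_mult) (simp only: int_dvd_int_iff)
qed

lemma odd_dvd_consecutive_mult:
  assumes "3 \<le> (N::nat)"
  obtains q where "odd q" "3 \<le> q" "q dvd N * (N - 1)"
proof (cases "odd N")
  case True
  then show ?thesis using that[of N] assms by simp
next
  case False
  then have "3 \<le> N - 1" using assms by presburger
  then show ?thesis using that[of "N - 1"] False assms by simp
qed

lemma laguerre_coeff_odd_dvd_low:
  assumes "n = Suc k" and "\<not> (n = 2 \<and> m = 0)"
  obtains q :: nat where "odd q" "3 \<le> q" "\<And>j. j < k \<Longrightarrow> q dvd laguerre_coeff n m j"
proof (cases k)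
  case 0
  then show ?thesis using that[of 3] by simp
next
  case (Suc k')
  then have "3 \<le> n + m" using assms by auto
  then obtain q where "odd q" "3 \<le> q" "q dvd (n + m) * (n + m - 1)"
    by (rule odd_dvd_consecutive_mult)
  moreover have "int ((n + m) * (n + m - 1)) dvd laguerre_coeff n m j" if "j < k" for j
    using that assms by (intro laguerre_coeff_dvd) simp
  ultimately show ?thesis
    using that[of q] by (meson dvd_trans int_dvd_int_iff)
qed

lemma laguerre_root_two_plus_sqrt2:
  assumes s: "s^2 = 1" and root: "laguerre n m (2 + s * sqrt 2) = 0"
  shows "n = 2 \<and> m = 0"
proof (rule ccontr)
  assume not_20: "\<not> (n = 2 \<and> m = 0)"
  obtain k where k: "n = Suc k" using root by (cases n) (auto simp: laguerre_def)
  obtain q :: nat where "odd q" "3 \<le> q"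
    and dvd_low: "\<And>j. j < k \<Longrightarrow> q dvd laguerre_coeff n m j"
    using laguerre_coeff_odd_dvd_low[OF k not_20] by blast
  have "(\<Sum>j\<le>Suc k. of_int (laguerre_coeff n m j) * (2 + s * sqrt 2)^j) = 0"
    using fact_laguerre_eq[of n m "2 + s * sqrt 2"] root k by (simp only: mult_zero_right)
  then have "int q dvd laguerre_coeff n m (Suc k)"
    using root_two_plus_sqrt2_dvd_lead_coeff[OF s _ _ dvd_low] \<open>odd q\<close> by simp
  then show False using \<open>3 \<le> q\<close> k by (cases "even k") (simp_all add: laguerre_coeff_top)
qed

theorem proposition3:
  fixes n m :: nat
  shows "(laguerre n m (2 + sqrt 2) = 0 \<or> laguerre n m (2 - sqrt 2) = 0) \<longleftrightarrow> (n = 2 \<and> m = 0)"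
proof
  assume "n = 2 \<and> m = 0"
  moreover have "laguerre 2 0 (2 + sqrt 2) = 0"
    unfolding laguerre_def by (simp add: numeral_2_eq_2 power2_eq_square algebra_simps)
  ultimately show "laguerre n m (2 + sqrt 2) = 0 \<or> laguerre n m (2 - sqrt 2) = 0" by simp
next
  assume "laguerre n m (2 + sqrt 2) = 0 \<or> laguerre n m (2 - sqrt 2) = 0"
  then show "n = 2 \<and> m = 0"
  proof
    assume "laguerre n m (2 + sqrt 2) = 0"
    then show ?thesis using laguerre_root_two_plus_sqrt2[of 1] by simp
  next
    assume "laguerre n m (2 - sqrt 2) = 0"
    then show ?thesis using laguerre_root_two_plus_sqrt2[of "-1"] by simp
  qed
qed

end
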